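(* In the non-contextual setting of the auction problem described in the context (a fixed set of $N$ ads participating at every round, with constant CTRs $\rho_{t,i}=\rho_i\in[0,1]$ for all $t$), run the exponential-weights algorithm with the IPS loss estimator described in the context on the predictor class $\widehat{\mathcal{F}}=\{(x,i)\mapsto\theta_i:\theta\in\{0,\tfrac1T,\tfrac2T,\dots,1\}^N\}$ with learning rate $\eta=\sqrt{\frac{\log T}{T}}$. Then $\mathbb{E}[\mathrm{Reg}]\le O(N\sqrt{T\log T})$.
   Context: Notation: for a vector $v$, $\mathrm{smax}_i v_i$ denotes the second-largest entry, and $\arg\max_i v_i$, $\arg\mathrm{smax}_i v_i$ the indices of the largest and second-largest entries; ties are broken by a fixed deterministic rule. Problem: There are $T$ rounds. At each round $t$ the learner (possibly after observing a context $x_t$, which here is irrelevant) chooses estimated CTRs $\tilde\rho_t\in[0,1]^N$; simultaneously each bidder $i$ chooses a bid $b_{t,i}\in[0,1]$ (possibly adversarially and adaptively, without knowing $\tilde\rho_t$). The winner is $i_t=\arg\max_i b_{t,i}\tilde\rho_{t,i}$, the runner-up $j_t=\arg\mathrm{smax}_i b_{t,i}\tilde\rho_{t,i}$, the payment per click $d_t=b_{t,j_t}\tilde\rho_{t,j_t}/\tilde\rho_{t,i_t}$; the ad $i_t$ is clicked with probability $\rho_{i_t}$ (unknown true CTR). The learner observes $b_t$ and the click indicator $c_t\in\{0,1\}$ and receives $c_td_t$. Regret: $\mathrm{Reg}=\sum_{t=1}^T\mathrm{smax}_i b_{t,i}\rho_i-\sum_{t=1}^T c_td_t$. Algorithm (exponential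 weights with IPS): given a finite class $\mathcal{F}$ of functions $f:\mathcal{X}\times[N]\to[0,1]$ and $\eta>0$, at round $t$ sample $f_t\sim q_t$ with $q_{t,f}\propto\exp(-\eta\sum_{s<t}\hat\ell_{s,f})$, set $\tilde\rho_{t,i}=f_t(x_t,i)$, run the auction, and define for each $f\in\mathcal{F}$ $$\hat\ell_{t,f}=\frac{\mathbb{1}\{i_t=\arg\max_i b_{t,i}f(x_t,i)\}}{p_{t,i_t}}\Big(1-c_t\frac{\mathrm{smax}_j b_{t,j}f(x_t,j)}{f(x_t,i_t)}\Big),\quad p_{t,i}=\Pr_{f_t\sim q_t}\{i_t=i\}.$$ *)

theory Defs
  imports "HOL-Probability.Probability"
begin

text \<open>Ads are indexed by the naturals i < N. Vectors (bids, CTR estimates, true CTRs)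
are functions nat => real; only the entries below N are relevant.
The context x is irrelevant in the non-contextual setting and is omitted: a predictor
of the class is identified with its CTR vector theta.\<close>

type_synonym vec = "nat \<Rightarrow> real"

text \<open>A history entry: (sampled predictor f_t, bid vector b_t, click indicator c_t).\<close>
type_synonym hist = "(vec \<times> vec \<times> bool) list"

text \<open>Deterministic tie-breaking rules for argmax and arg-second-max over indices < N.
Any such rule is allowed (the theorem quantifies over all of them).\<close>
definition valid_argmax :: "nat \<Rightarrow> (vec \<Rightarrow> nat) \<Rightarrow> bool" where
  "valid_argmax N am \<longleftrightarrow> (\<forall>v. am v < N \<and> (\<forall>j<N. v j \<le> v (am v)))"

definition valid_argsmax :: "nat \<Rightarrow> (vec \<Rightarrow> nat) \<Rightarrow> (vec \<Rightarrow> nat) \<Rightarrow> bool" where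
  "valid_argsmax N am as \<longleftrightarrow>
     (\<forall>v. as v < N \<and> as v \<noteq> am v \<and> (\<forall>j<N. j \<noteq> am v \<longrightarrow> v j \<le> v (as v)))"

definition smax :: "(vec \<Rightarrow> nat) \<Rightarrow> vec \<Rightarrow> real" where
  "smax as v = v (as v)"

definition score :: "vec \<Rightarrow> vec \<Rightarrow> vec" where
  "score b th = (\<lambda>i. b i * th i)"

definition grid_class :: "nat \<Rightarrow> nat \<Rightarrow> vec set" where
  "grid_class N T = {th. (\<forall>i<N. \<exists>k::nat. k \<le> T \<and> th i = real k / real T) \<and> (\<forall>i\<ge>N. th i = 0)}"

definition ew_weight :: "vec set \<Rightarrow> real \<Rightarrow> (vec \<Rightarrow> real) \<Rightarrow> vec \<Rightarrow> real" where
  "ew_weight F eta L f =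
     (if f \<in> F then exp (- eta * L f) / (\<Sum>g\<in>F. exp (- eta * L g)) else 0)"

definition win_prob :: "(vec \<Rightarrow> nat) \<Rightarrow> vec set \<Rightarrow> real \<Rightarrow> (vec \<Rightarrow> real) \<Rightarrow> vec \<Rightarrow> nat \<Rightarrow> real" where
  "win_prob am F eta L b i = (\<Sum>g\<in>{g\<in>F. am (score b g) = i}. ew_weight F eta L g)"

definition ips_loss ::
  "(vec \<Rightarrow> nat) \<Rightarrow> (vec \<Rightarrow> nat) \<Rightarrow> vec set \<Rightarrow> real \<Rightarrow> (vec \<Rightarrow> real) \<Rightarrow> vec \<Rightarrow> bool \<Rightarrow> nat \<Rightarrow> vec \<Rightarrow> real" where
  "ips_loss am as F eta L b c it f =
     (if am (score b f) = it
      then (1 / win_prob am F eta L b it) * (1 - (if c then 1 else 0) * smax as (score b f) / f it)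
      else 0)"

definition loss_update ::
  "(vec \<Rightarrow> nat) \<Rightarrow> (vec \<Rightarrow> nat) \<Rightarrow> vec set \<Rightarrow> real \<Rightarrow> (vec \<Rightarrow> real) \<Rightarrow> vec \<times> vec \<times> bool \<Rightarrow> (vec \<Rightarrow> real)" where
  "loss_update am as F eta L r =
     (case r of (ft, b, c) \<Rightarrow> (\<lambda>f. L f + ips_loss am as F eta L b c (am (score b ft)) f))"

definition cum_loss :: "(vec \<Rightarrow> nat) \<Rightarrow> (vec \<Rightarrow> nat) \<Rightarrow> vec set \<Rightarrow> real \<Rightarrow> hist \<Rightarrow> (vec \<Rightarrow> real)" where
  "cum_loss am as F eta h = foldl (loss_update am as F eta) (\<lambda>f. 0) h"

definition round_step ::
  "(vec \<Rightarrow> nat) \<Rightarrow> (vec \<Rightarrow> nat) \<Rightarrow> vec set \<Rightarrow> real \<Rightarrow> vec \<Rightarrow> (hist \<Rightarrow> vec pmf) \<Rightarrow> hist \<Rightarrow> hist pmf" where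
  "round_step am as F eta rho adv h =
     do { b \<leftarrow> adv h;
          ft \<leftarrow> embed_pmf (ew_weight F eta (cum_loss am as F eta h));
          c \<leftarrow> bernoulli_pmf (rho (am (score b ft)));
          return_pmf (h @ [(ft, b, c)]) }"

fun run_game ::
  "(vec \<Rightarrow> nat) \<Rightarrow> (vec \<Rightarrow> nat) \<Rightarrow> vec set \<Rightarrow> real \<Rightarrow> vec \<Rightarrow> (hist \<Rightarrow> vec pmf) \<Rightarrow> nat \<Rightarrow> hist pmf" where
  "run_game am as F eta rho adv 0 = return_pmf []"
| "run_game am as F eta rho adv (Suc n) = run_game am as F eta rho adv n \<bind> round_step am as F eta rho adv"

definition payment :: "(vec \<Rightarrow> nat) \<Rightarrow> (vec \<Rightarrow> nat) \<Rightarrow> vec \<Rightarrow> vec \<Rightarrow> real" where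
  "payment am as b ft = b (as (score b ft)) * ft (as (score b ft)) / ft (am (score b ft))"

definition regret :: "(vec \<Rightarrow> nat) \<Rightarrow> (vec \<Rightarrow> nat) \<Rightarrow> vec \<Rightarrow> hist \<Rightarrow> real" where
  "regret am as rho h =
     (\<Sum>(ft, b, c)\<leftarrow>h. smax as (score b rho) - (if c then 1 else 0) * payment am as b ft)"

end

theory Submission
  imports Defs
begin

text \<open>Let \<theta> = rho_grid be \<rho> rounded down to the grid {0, 1/T, ..., 1}^N and L_h the cumulative
IPS loss estimates after the history h. The potential
  Reg(h) + |h| + L_h(\<theta>) + ln (\<Sum>_f exp (-\<eta> L_h(f))) / \<eta>
is nonnegative, equals ln |F| / \<eta> initially and, by the usual exponential-weights estimate, grows
in expectation by at most 1 + 1/T + \<eta> N / 2 per round: the IPS estimates are unbiased, their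
second moment under q_t is at most 1 / p_t(i_t), whose expectation over i_t is at most N, and \<theta>
pays in expectation at most 1/T less than the benchmark second price, because rounding lowers every
score by at most 1/T while \<theta> \<le> \<rho> makes \<theta>'s expected payment dominate its runner-up score.
Hence after n rounds E[Reg] \<le> ln |F| / \<eta> + n (1/T + \<eta> N / 2), and |F| \<le> (T + 1)^N,
\<eta> = \<surd>(ln T / T), n = T give the bound 4 N \<surd>(T ln T).\<close>

lemma exp_minus_le_quadratic:
  fixes x :: real
  assumes "0 \<le> x"
  shows "exp (- x) \<le> 1 - x + x\<^sup>2 / 2"
proof -
  let ?g = "\<lambda>x::real. 1 - x + x\<^sup>2 / 2 - exp (- x)"
  have "?g 0 \<le> ?g x"
  proof (rule DERIV_nonneg_imp_nondecreasing[OF assms])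
    fix y :: real
    have "(?g has_real_derivative (-1 + y + exp (- y))) (at y)"
      by (auto intro!: derivative_eq_intros simp: power2_eq_square)
    moreover have "0 \<le> -1 + y + exp (- y)"
      using exp_ge_add_one_self[of "- y"] by simp
    ultimately show "\<exists>d. (?g has_real_derivative d) (at y) \<and> 0 \<le> d" by blast
  qed
  then show ?thesis by simp
qed

lemma ln_sum_exp_add_le:
  fixes L l :: "'a \<Rightarrow> real"
  assumes F: "finite F" "F \<noteq> {}" and eta: "0 \<le> eta" and l: "\<And>f. f \<in> F \<Longrightarrow> 0 \<le> l f"
  defines "q \<equiv> \<lambda>f. exp (- eta * L f) / (\<Sum>g\<in>F. exp (- eta * L g))"
  shows "ln (\<Sum>f\<in>F. exp (- eta * (L f + l f)))
           \<le> ln (\<Sum>f\<in>F. exp (- eta * L f)) - eta * (\<Sum>f\<in>F. q f * l f)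
              + eta\<^sup>2 / 2 * (\<Sum>f\<in>F. q f * (l f)\<^sup>2)"
proof -
  define W where "W = (\<Sum>g\<in>F. exp (- eta * L g))"
  define R where "R = (\<Sum>f\<in>F. q f * exp (- (eta * l f)))"
  have W: "0 < W"
    unfolding W_def using F by (intro sum_pos) auto
  have q_eq: "q f = exp (- eta * L f) / W" for f
    by (simp add: q_def W_def)
  have q_pos: "0 < q f" for f
    using W by (simp add: q_eq)
  have q_sum: "(\<Sum>f\<in>F. q f) = 1"
    using W by (simp add: q_eq W_def flip: sum_divide_distrib)
  have W_add: "(\<Sum>f\<in>F. exp (- eta * (L f + l f))) = W * R"
    using W by (simp add: R_def q_eq sum_distrib_left mult_exp_exp algebra_simps)
  have "0 < R"
    unfolding R_def using F q_pos by (intro sum_pos) auto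
  have expand: "q f * (1 - eta * l f + (eta * l f)\<^sup>2 / 2)
      = q f - eta * (q f * l f) + eta\<^sup>2 / 2 * (q f * (l f)\<^sup>2)" for f
    by (simp add: algebra_simps power2_eq_square)
  have "R \<le> (\<Sum>f\<in>F. q f * (1 - eta * l f + (eta * l f)\<^sup>2 / 2))"
    unfolding R_def using l eta q_pos
    by (intro sum_mono mult_left_mono exp_minus_le_quadratic) (auto simp: less_imp_le)
  also have "\<dots> = 1 - eta * (\<Sum>f\<in>F. q f * l f) + eta\<^sup>2 / 2 * (\<Sum>f\<in>F. q f * (l f)\<^sup>2)"
    by (simp only: expand sum.distrib sum_subtractf q_sum flip: sum_distrib_left)
  finally have R_le: "R \<le> \<dots>" .
  have "ln (\<Sum>f\<in>F. exp (- eta * (L f + l f))) = ln W + ln R"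
    unfolding W_add using W \<open>0 < R\<close> by (simp add: ln_mult)
  also have "\<dots> \<le> ln W + (R - 1)"
    using ln_le_minus_one[OF \<open>0 < R\<close>] by simp
  finally show ?thesis
    using R_le unfolding W_def by linarith
qed

lemma nn_integral_bind_pmf_le_add:
  fixes Y :: "'a \<Rightarrow> ennreal" and Z :: "'b \<Rightarrow> ennreal" and K :: "'a \<Rightarrow> 'b pmf"
  assumes "\<And>x. x \<in> set_pmf M \<Longrightarrow> (\<integral>\<^sup>+y. Z y \<partial>K x) \<le> Y x + c"
  shows "(\<integral>\<^sup>+y. Z y \<partial>bind_pmf M K) \<le> (\<integral>\<^sup>+x. Y x \<partial>M) + c"
proof -
  have "(\<integral>\<^sup>+y. Z y \<partial>bind_pmf M K) \<le> (\<integral>\<^sup>+x. Y x + c \<partial>M)"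
    using assms by (simp add: AE_measure_pmf_iff nn_integral_mono_AE)
  also have "\<dots> = (\<integral>\<^sup>+x. Y x \<partial>M) + c"
    by (simp add: nn_integral_add measure_pmf.emeasure_space_1)
  finally show ?thesis .
qed

definition in_unit_cube :: "nat \<Rightarrow> vec \<Rightarrow> bool" where
  "in_unit_cube N v \<longleftrightarrow> (\<forall>i<N. 0 \<le> v i \<and> v i \<le> 1)"

definition grid_floor :: "nat \<Rightarrow> nat \<Rightarrow> vec \<Rightarrow> vec" where
  "grid_floor N T v = (\<lambda>i. if i < N then real (nat \<lfloor>v i * real T\<rfloor>) / real T else 0)"

lemma grid_class_in_unit_cube: "f \<in> grid_class N T \<Longrightarrow> in_unit_cube N f"
  by (auto simp: grid_class_def in_unit_cube_def divide_le_eq)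

lemma grid_floor_in_grid_class:
  assumes "in_unit_cube N v"
  shows "grid_floor N T v \<in> grid_class N T"
proof -
  have "nat \<lfloor>v i * real T\<rfloor> \<le> T" if "i < N" for i
  proof -
    have "v i * real T \<le> real T"
      using assms that by (simp add: in_unit_cube_def mult_left_le_one_le)
    then show ?thesis by linarith
  qed
  then show ?thesis
    by (auto simp: grid_class_def grid_floor_def)
qed

lemma grid_floor_bounds:
  assumes "0 < T" "i < N" "0 \<le> v i"
  shows "v i - 1 / real T \<le> grid_floor N T v i \<and> grid_floor N T v i \<le> v i"
proof -
  have "grid_floor N T v i = of_int \<lfloor>v i * real T\<rfloor> / real T"
    using assms by (simp add: grid_floor_def)
  moreover have "v i * real T - 1 \<le> of_int \<lfloor>v i * real T\<rfloor>" "of_int \<lfloor>v i * real T\<rfloor> \<le> v i * real T"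
    by linarith+
  ultimately show ?thesis
    using assms by (simp add: le_divide_eq divide_le_eq left_diff_distrib)
qed

lemma grid_class_subset_image:
  "grid_class N T \<subseteq> (\<lambda>k i. if i < N then real (k i) / real T else 0) ` (\<Pi>\<^sub>E i\<in>{..<N}. {..T})"
proof
  fix f assume f: "f \<in> grid_class N T"
  then have "\<forall>i\<in>{..<N}. \<exists>k. k \<le> T \<and> f i = real k / real T"
    by (simp add: grid_class_def)
  then obtain k where k: "\<forall>i\<in>{..<N}. k i \<le> T \<and> f i = real (k i) / real T"
    by (metis bchoice)
  show "f \<in> (\<lambda>k i. if i < N then real (k i) / real T else 0) ` (\<Pi>\<^sub>E i\<in>{..<N}. {..T})"
  proof (rule image_eqI)
    show "f = (\<lambda>i. if i < N then real (restrict k {..<N} i) / real T else 0)"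
      using f k by (auto simp: grid_class_def fun_eq_iff)
    show "restrict k {..<N} \<in> (\<Pi>\<^sub>E i\<in>{..<N}. {..T})"
      using k by auto
  qed
qed

lemma finite_grid_class: "finite (grid_class N T)"
  by (rule finite_subset[OF grid_class_subset_image]) (simp add: finite_PiE)

lemma ln_card_grid_class_le: "ln (card (grid_class N T)) \<le> real N * ln (real T + 1)"
proof -
  have "(\<lambda>_. 0) \<in> grid_class N T"
    by (auto simp: grid_class_def)
  then have "0 < card (grid_class N T)"
    using finite_grid_class card_gt_0_iff by blast
  moreover have "card (grid_class N T) \<le> (T + 1) ^ N"
  proof -
    have "card (grid_class N T)
        \<le> card ((\<lambda>k i. if i < N then real (k i) / real T else 0) ` (\<Pi>\<^sub>E i\<in>{..<N}. {..T}))"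
      by (rule card_mono[OF _ grid_class_subset_image]) (simp add: finite_PiE)
    also have "\<dots> \<le> card (\<Pi>\<^sub>E i\<in>{..<N}. {..T})"
      by (rule card_image_le) (simp add: finite_PiE)
    finally show ?thesis by (simp add: card_PiE)
  qed
  then have "real (card (grid_class N T)) \<le> (real T + 1) ^ N"
    by (metis of_nat_1 of_nat_add of_nat_le_iff of_nat_power)
  ultimately have "ln (card (grid_class N T)) \<le> ln ((real T + 1) ^ N)"
    by (subst ln_le_cancel_iff) auto
  then show ?thesis by (simp add: ln_realpow)
qed

lemma sqrt_tuning_bound:
  fixes N T :: nat
  assumes "1 \<le> N" "2 \<le> T"
  defines "eta \<equiv> sqrt (ln (real T) / real T)"
  shows "real N * ln (real T + 1) / eta + 1 + eta * real N * real T / 2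
           \<le> 4 * real N * sqrt (real T * ln (real T))"
proof -
  define s where "s = sqrt (real T * ln (real T))"
  have lnT: "0 < ln (real T)"
    using assms by simp
  have eta: "0 < eta"
    unfolding eta_def using assms lnT by simp
  have eta_s: "eta * s = ln (real T)"
    using assms lnT by (simp add: eta_def s_def flip: real_sqrt_mult)
  have eta_T: "eta * real T = s"
    using assms by (simp add: eta_def s_def real_sqrt_divide field_simps real_sqrt_mult)
  have "1 \<le> s"
  proof -
    have "1 \<le> 2 * ln (2::real)"
      using ln2_ge_two_thirds by simp
    also have "\<dots> \<le> real T * ln 2"
      using assms by (intro mult_right_mono) auto
    also have "\<dots> \<le> real T * ln (real T)"
      using assms by simp
    finally show ?thesis unfolding s_def by simp
  qed
  have "2 \<le> real T"
    using assms by simp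
  then have "2 * real T \<le> real T ^ 2"
    unfolding power2_eq_square by (intro mult_right_mono) auto
  then have "real T + 1 \<le> real T ^ 2"
    using \<open>2 \<le> real T\<close> by linarith
  then have "ln (real T + 1) \<le> 2 * ln (real T)"
    using ln_mono[of "real T + 1" "real T ^ 2"] by (simp add: ln_realpow)
  then have "real N * ln (real T + 1) / eta \<le> real N * (2 * ln (real T)) / eta"
    using eta by (intro divide_right_mono mult_left_mono) auto
  also have "\<dots> = 2 * real N * s"
    unfolding eta_s[symmetric] using eta by simp
  finally have "real N * ln (real T + 1) / eta \<le> 2 * real N * s" .
  moreover have "eta * real N * real T / 2 = real N * s / 2"
    using eta_T by (simp add: algebra_simps)
  moreover have "1 \<le> real N * s"
    using \<open>1 \<le> s\<close> assms mult_mono[of 1 "real N" 1 s] by simp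
  ultimately show ?thesis
    unfolding s_def[symmetric] by linarith
qed

locale grid_auction =
  fixes N T :: nat and eta :: real and rho :: vec
    and AM AS :: "vec \<Rightarrow> nat" and adv :: "hist \<Rightarrow> vec pmf"
  assumes T_pos: "0 < T" and eta_pos: "0 < eta" and rho_range: "in_unit_cube N rho"
    and AM: "valid_argmax N AM" and AS: "valid_argsmax N AM AS"
    and bids_range: "\<And>h b. b \<in> set_pmf (adv h) \<Longrightarrow> in_unit_cube N b"
begin

abbreviation F :: "vec set" where "F \<equiv> grid_class N T"
abbreviation rho_grid :: vec where "rho_grid \<equiv> grid_floor N T rho"
abbreviation winner :: "vec \<Rightarrow> vec \<Rightarrow> nat" where "winner b f \<equiv> AM (score b f)"
abbreviation pay :: "vec \<Rightarrow> vec \<Rightarrow> real" where "pay \<equiv> payment AM AS"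
abbreviation q :: "(vec \<Rightarrow> real) \<Rightarrow> vec \<Rightarrow> real" where "q \<equiv> ew_weight F eta"
abbreviation p :: "(vec \<Rightarrow> real) \<Rightarrow> vec \<Rightarrow> nat \<Rightarrow> real" where "p \<equiv> win_prob AM F eta"
abbreviation loss_est :: "(vec \<Rightarrow> real) \<Rightarrow> vec \<Rightarrow> bool \<Rightarrow> vec \<Rightarrow> vec \<Rightarrow> real" where
  "loss_est L b c ft \<equiv> ips_loss AM AS F eta L b c (winner b ft)"
abbreviation cum :: "hist \<Rightarrow> vec \<Rightarrow> real" where "cum \<equiv> cum_loss AM AS F eta"
abbreviation game :: "nat \<Rightarrow> hist pmf" where "game \<equiv> run_game AM AS F eta rho adv"

lemma AM_lt: "AM v < N" and AM_max: "j < N \<Longrightarrow> v j \<le> v (AM v)"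
  using AM unfolding valid_argmax_def by auto

lemma AS_lt: "AS v < N" and AS_neq_AM: "AS v \<noteq> AM v"
  and AS_max: "j < N \<Longrightarrow> j \<noteq> AM v \<Longrightarrow> v j \<le> v (AS v)"
  using AS unfolding valid_argsmax_def by auto

lemma rho_winner: "0 \<le> rho (winner b f) \<and> rho (winner b f) \<le> 1"
  using rho_range AM_lt by (simp add: in_unit_cube_def)

lemma rho_grid_in_F: "rho_grid \<in> F"
  using rho_range by (rule grid_floor_in_grid_class)

lemma F_nonempty: "F \<noteq> {}"
  using rho_grid_in_F by blast

lemma sum_exp_pos: "0 < (\<Sum>g\<in>F. exp (- eta * L g))"
  using finite_grid_class F_nonempty by (intro sum_pos) auto

lemma ew_weight_eq: "f \<in> F \<Longrightarrow> q L f = exp (- eta * L f) / (\<Sum>g\<in>F. exp (- eta * L g))"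
  by (simp add: ew_weight_def)

lemma ew_weight_pos: "f \<in> F \<Longrightarrow> 0 < q L f"
  using sum_exp_pos by (simp add: ew_weight_eq)

lemma ew_weight_nonneg: "0 \<le> q L f"
  using ew_weight_pos[of f L] by (cases "f \<in> F") (auto simp: ew_weight_def)

lemma sum_ew_weight: "(\<Sum>f\<in>F. q L f) = 1"
  using sum_exp_pos[of L] by (simp add: ew_weight_eq flip: sum_divide_distrib)

lemma win_prob_eq: "p L b i = (\<Sum>f\<in>F. if winner b f = i then q L f else 0)"
  unfolding win_prob_def using finite_grid_class by (simp add: sum.inter_filter)

lemma win_prob_pos: "f \<in> F \<Longrightarrow> 0 < p L b (winner b f)"
proof -
  assume f: "f \<in> F"
  have "q L f \<le> p L b (winner b f)"
    unfolding win_prob_def using finite_grid_class f ew_weight_nonneg by (intro member_le_sum) auto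
  then show ?thesis
    using ew_weight_pos[OF f, of L] by linarith
qed

lemma score_bounds:
  "in_unit_cube N b \<Longrightarrow> in_unit_cube N f \<Longrightarrow> i < N \<Longrightarrow> 0 \<le> score b f i \<and> score b f i \<le> f i"
  by (auto simp: in_unit_cube_def score_def intro: mult_left_le_one_le)

lemma payment_eq: "pay b f = smax AS (score b f) / f (winner b f)"
  by (simp add: payment_def smax_def score_def)

lemma payment_bounds:
  assumes b: "in_unit_cube N b" and f: "in_unit_cube N f"
  shows "0 \<le> pay b f \<and> pay b f \<le> 1"
proof -
  let ?v = "score b f"
  have "0 \<le> ?v (AS ?v)" "?v (AS ?v) \<le> ?v (AM ?v)" "?v (AM ?v) \<le> f (AM ?v)"
    using score_bounds[OF b f] AS_lt AM_lt AM_max by blast+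
  then show ?thesis
    by (auto simp: payment_eq smax_def divide_le_eq)
qed

lemma ips_loss_eq:
  "ips_loss AM AS F eta L b c i f
     = (if winner b f = i then (1 - (if c then 1 else 0) * pay b f) / p L b i else 0)"
  by (simp add: ips_loss_def payment_eq)

lemma ips_loss_nonneg: "in_unit_cube N b \<Longrightarrow> f \<in> F \<Longrightarrow> 0 \<le> ips_loss AM AS F eta L b c i f"
  using payment_bounds[of b f] grid_class_in_unit_cube[of f] ew_weight_nonneg
  by (auto simp: ips_loss_eq win_prob_def intro!: divide_nonneg_nonneg sum_nonneg)

lemma ips_second_moment_le:
  assumes b: "in_unit_cube N b" and ft: "ft \<in> F"
  shows "(\<Sum>f\<in>F. q L f * (loss_est L b c ft f)\<^sup>2) \<le> 1 / p L b (winner b ft)"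
proof -
  let ?i = "winner b ft"
  have sq_le: "(loss_est L b c ft f)\<^sup>2 \<le> (if winner b f = ?i then 1 / (p L b ?i)\<^sup>2 else 0)"
    if "f \<in> F" for f
  proof -
    have "(1 - (if c then 1 else 0) * pay b f)\<^sup>2 \<le> 1"
      using payment_bounds[OF b grid_class_in_unit_cube[OF that]] by (simp add: power_le_one)
    then show ?thesis
      by (auto simp: ips_loss_eq power_divide divide_right_mono)
  qed
  have "(\<Sum>f\<in>F. q L f * (loss_est L b c ft f)\<^sup>2)
      \<le> (\<Sum>f\<in>F. q L f * (if winner b f = ?i then 1 / (p L b ?i)\<^sup>2 else 0))"
    using sq_le ew_weight_nonneg by (intro sum_mono mult_left_mono) auto
  also have "\<dots> = (\<Sum>f\<in>F. if winner b f = ?i then q L f else 0) / (p L b ?i)\<^sup>2"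
    by (auto simp: sum_divide_distrib intro!: sum.cong)
  also have "\<dots> = p L b ?i / (p L b ?i)\<^sup>2"
    by (simp only: win_prob_eq)
  also have "\<dots> = 1 / p L b ?i"
    using win_prob_pos[OF ft] by (simp add: power2_eq_square)
  finally show ?thesis .
qed

definition round_mean :: "(vec \<Rightarrow> real) \<Rightarrow> vec \<Rightarrow> (vec \<Rightarrow> bool \<Rightarrow> real) \<Rightarrow> real" where
  "round_mean L b X = (\<Sum>ft\<in>F. q L ft *
     (rho (winner b ft) * X ft True + (1 - rho (winner b ft)) * X ft False))"

lemma round_mean_add: "round_mean L b (\<lambda>ft c. X ft c + Y ft c) = round_mean L b X + round_mean L b Y"
  unfolding round_mean_def sum.distrib[symmetric] by (intro sum.cong refl) (simp add: algebra_simps)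

lemma round_mean_diff: "round_mean L b (\<lambda>ft c. X ft c - Y ft c) = round_mean L b X - round_mean L b Y"
  unfolding round_mean_def sum_subtractf[symmetric] by (intro sum.cong refl) (simp add: algebra_simps)

lemma round_mean_mult: "round_mean L b (\<lambda>ft c. a * X ft c) = a * round_mean L b X"
  unfolding round_mean_def sum_distrib_left by (intro sum.cong refl) (simp add: algebra_simps)

lemma round_mean_const: "round_mean L b (\<lambda>_ _. a) = a"
proof -
  have "round_mean L b (\<lambda>_ _. a) = (\<Sum>ft\<in>F. q L ft) * a"
    unfolding round_mean_def sum_distrib_right by (intro sum.cong refl) (simp add: algebra_simps)
  then show ?thesis
    by (simp add: sum_ew_weight)
qed

lemma round_mean_sum: "round_mean L b (\<lambda>ft c. \<Sum>f\<in>A. X f ft c) = (\<Sum>f\<in>A. round_mean L b (X f))"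
proof -
  have "round_mean L b (\<lambda>ft c. \<Sum>f\<in>A. X f ft c) = (\<Sum>ft\<in>F. \<Sum>f\<in>A. q L ft *
      (rho (winner b ft) * X f ft True + (1 - rho (winner b ft)) * X f ft False))"
    unfolding round_mean_def
    by (intro sum.cong refl) (simp add: distrib_left sum.distrib flip: sum_distrib_left)
  then show ?thesis
    unfolding round_mean_def by (simp only: sum.swap[of _ F])
qed

lemma round_mean_click:
  "round_mean L b (\<lambda>ft c. (if c then 1 else 0) * X ft) = (\<Sum>ft\<in>F. q L ft * (rho (winner b ft) * X ft))"
  by (simp add: round_mean_def)

lemma round_mean_no_click: "round_mean L b (\<lambda>ft c. X ft) = (\<Sum>ft\<in>F. q L ft * X ft)"
  by (simp add: round_mean_def algebra_simps)

lemma round_mean_mono: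
  assumes "\<And>ft c. ft \<in> F \<Longrightarrow> X ft c \<le> Y ft c"
  shows "round_mean L b X \<le> round_mean L b Y"
  unfolding round_mean_def using assms rho_winner ew_weight_nonneg
  by (intro sum_mono mult_left_mono add_mono) auto

lemma round_mean_ips_loss:
  assumes f: "f \<in> F"
  shows "round_mean L b (\<lambda>ft c. loss_est L b c ft f) = 1 - rho (winner b f) * pay b f"
proof -
  let ?i = "winner b f"
  have "round_mean L b (\<lambda>ft c. loss_est L b c ft f)
      = (\<Sum>ft\<in>F. (if winner b ft = ?i then q L ft else 0)) * ((1 - rho ?i * pay b f) / p L b ?i)"
    unfolding round_mean_def sum_distrib_right
    by (intro sum.cong refl) (auto simp: ips_loss_eq diff_divide_distrib algebra_simps)
  also have "\<dots> = 1 - rho ?i * pay b f"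
    using win_prob_pos[OF f, of L b] by (simp add: win_prob_eq[symmetric])
  finally show ?thesis .
qed

lemma round_mean_weighted_ips_loss:
  "round_mean L b (\<lambda>ft c. \<Sum>f\<in>F. q L f * loss_est L b c ft f)
     = 1 - (\<Sum>f\<in>F. q L f * (rho (winner b f) * pay b f))"
proof -
  have "round_mean L b (\<lambda>ft c. \<Sum>f\<in>F. q L f * loss_est L b c ft f)
      = (\<Sum>f\<in>F. q L f * (1 - rho (winner b f) * pay b f))"
    by (simp add: round_mean_sum round_mean_mult round_mean_ips_loss)
  also have "\<dots> = 1 - (\<Sum>f\<in>F. q L f * (rho (winner b f) * pay b f))"
    by (simp add: right_diff_distrib sum_subtractf sum_ew_weight)
  finally show ?thesis .
qed

lemma round_mean_inverse_win_prob: "round_mean L b (\<lambda>ft c. 1 / p L b (winner b ft)) \<le> real N"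
proof -
  have "round_mean L b (\<lambda>ft c. 1 / p L b (winner b ft))
      = (\<Sum>i<N. \<Sum>ft\<in>{ft\<in>F. winner b ft = i}. q L ft * (1 / p L b (winner b ft)))"
    unfolding round_mean_no_click using finite_grid_class AM_lt by (intro sum.group[symmetric]) auto
  also have "\<dots> = (\<Sum>i<N. (\<Sum>ft\<in>{ft\<in>F. winner b ft = i}. q L ft) / p L b i)"
    by (auto simp: sum_divide_distrib intro!: sum.cong)
  also have "\<dots> = (\<Sum>i<N. p L b i / p L b i)"
    by (simp only: win_prob_def)
  also have "\<dots> \<le> (\<Sum>i<N. 1)"
    by (intro sum_mono) simp
  finally show ?thesis by simp
qed

subsection \<open>The grid point below \<rho>\<close>

lemma smax_le_smax_add:
  assumes "\<And>j. j < N \<Longrightarrow> w j \<le> v j + e"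
  shows "smax AS w \<le> smax AS v + e"
proof (cases "AM v = AS w")
  case True
  then have "v (AM w) \<le> v (AS v)"
    using AS_neq_AM[of w] AS_max[OF AM_lt] by metis
  moreover have "w (AS w) \<le> w (AM w)"
    using AM_max[OF AS_lt] .
  ultimately show ?thesis
    using assms[OF AM_lt[of w]] by (simp add: smax_def)
next
  case False
  then have "v (AS w) \<le> v (AS v)"
    using AS_max[OF AS_lt] by metis
  then show ?thesis
    using assms[OF AS_lt[of w]] by (simp add: smax_def)
qed

lemma smax_score_le_expected_payment:
  assumes b: "in_unit_cube N b" and f: "in_unit_cube N f" and f_le: "\<And>i. i < N \<Longrightarrow> f i \<le> rho i"
  shows "smax AS (score b f) \<le> rho (winner b f) * pay b f"
proof -
  let ?v = "score b f" and ?i = "winner b f"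
  have smax: "0 \<le> smax AS ?v" "smax AS ?v \<le> ?v ?i"
    using score_bounds[OF b f AS_lt] AM_max[OF AS_lt] by (auto simp: smax_def)
  show ?thesis
  proof (cases "f ?i = 0")
    case True
    \<comment> \<open>the payment is then x / 0 = 0, but so is every score, the runner-up's included\<close>
    then show ?thesis
      using smax by (simp add: score_def payment_eq)
  next
    case False
    then have "0 < f ?i" "f ?i \<le> rho ?i"
      using score_bounds[OF b f AM_lt] f_le[OF AM_lt] f AM_lt by (auto simp: in_unit_cube_def less_le)
    then have "f ?i * smax AS ?v \<le> rho ?i * smax AS ?v"
      using smax(1) by (intro mult_right_mono) auto
    then show ?thesis
      using \<open>0 < f ?i\<close> by (simp add: payment_eq le_divide_eq mult.commute)
  qed
qed

lemma grid_floor_payment_deficit: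
  assumes b: "in_unit_cube N b"
  shows "smax AS (score b rho) - rho (winner b rho_grid) * pay b rho_grid \<le> 1 / real T"
proof -
  have close: "rho j - 1 / real T \<le> rho_grid j \<and> rho_grid j \<le> rho j" if "j < N" for j
    using grid_floor_bounds[OF T_pos that] rho_range that by (simp add: in_unit_cube_def)
  have "score b rho j \<le> score b rho_grid j + 1 / real T" if "j < N" for j
  proof -
    have "b j * rho j \<le> b j * (rho_grid j + 1 / real T)"
      using b close[OF that] that by (intro mult_left_mono) (auto simp: in_unit_cube_def)
    also have "\<dots> \<le> b j * rho_grid j + 1 / real T"
      using b that by (auto simp: in_unit_cube_def distrib_left divide_right_mono)
    finally show ?thesis by (simp add: score_def)
  qed
  then have "smax AS (score b rho) \<le> smax AS (score b rho_grid) + 1 / real T"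
    by (rule smax_le_smax_add)
  also have "smax AS (score b rho_grid) \<le> rho (winner b rho_grid) * pay b rho_grid"
    using close by (intro smax_score_le_expected_payment[OF b grid_class_in_unit_cube[OF rho_grid_in_F]]) auto
  finally show ?thesis by simp
qed

subsection \<open>The potential\<close>

definition admissible :: "hist \<Rightarrow> bool" where
  "admissible h \<longleftrightarrow> (\<forall>(ft, b, c)\<in>set h. ft \<in> F \<and> in_unit_cube N b)"

text \<open>The summand \<open>|h|\<close> makes the potential nonnegative on admissible histories, so that it can
be integrated as an extended nonnegative real without any integrability argument.\<close>

definition potential :: "hist \<Rightarrow> real" where
  "potential h = regret AM AS rho h + real (length h) + cum h rho_grid
     + ln (\<Sum>f\<in>F. exp (- eta * cum h f)) / eta"

definition drift :: real where
  "drift = 1 + 1 / real T + eta * real N / 2"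

lemma drift_nonneg: "0 \<le> drift"
  using eta_pos by (simp add: drift_def)

definition round_bound :: "(vec \<Rightarrow> real) \<Rightarrow> vec \<Rightarrow> vec \<Rightarrow> bool \<Rightarrow> real" where
  "round_bound L b ft c = 1 + (smax AS (score b rho) - (if c then 1 else 0) * pay b ft)
     + loss_est L b c ft rho_grid - (\<Sum>f\<in>F. q L f * loss_est L b c ft f)
     + eta / 2 * (1 / p L b (winner b ft))"

lemma cum_loss_snoc: "cum (h @ [(ft, b, c)]) = (\<lambda>f. cum h f + loss_est (cum h) b c ft f)"
  by (simp add: cum_loss_def loss_update_def)

lemma regret_snoc:
  "regret AM AS rho (h @ [(ft, b, c)])
     = regret AM AS rho h + (smax AS (score b rho) - (if c then 1 else 0) * pay b ft)"
  by (simp add: regret_def)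

lemma abs_regret_le: "admissible h \<Longrightarrow> \<bar>regret AM AS rho h\<bar> \<le> real (length h)"
proof (induction h)
  case Nil
  then show ?case by (simp add: regret_def)
next
  case (Cons r h)
  obtain ft b c where r: "r = (ft, b, c)"
    by (cases r) auto
  have ft: "in_unit_cube N ft" and b: "in_unit_cube N b" and h: "admissible h"
    using Cons.prems grid_class_in_unit_cube by (auto simp: admissible_def r)
  have "0 \<le> smax AS (score b rho)" "smax AS (score b rho) \<le> 1"
    using score_bounds[OF b rho_range AS_lt[of "score b rho"]] rho_range AS_lt[of "score b rho"]
    unfolding smax_def in_unit_cube_def by fastforce+
  then show ?case
    using Cons.IH[OF h] payment_bounds[OF b ft] by (auto simp: regret_def r)
qed

lemma regret_le_potential: "regret AM AS rho h + real (length h) \<le> potential h"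
proof -
  have "exp (- eta * cum h rho_grid) \<le> (\<Sum>f\<in>F. exp (- eta * cum h f))"
    using finite_grid_class rho_grid_in_F by (intro member_le_sum) auto
  then have "- eta * cum h rho_grid \<le> ln (\<Sum>f\<in>F. exp (- eta * cum h f))"
    using ln_mono by fastforce
  then have "0 \<le> cum h rho_grid + ln (\<Sum>f\<in>F. exp (- eta * cum h f)) / eta"
    using eta_pos by (simp add: field_simps)
  then show ?thesis
    unfolding potential_def by linarith
qed

lemma potential_nonneg: "admissible h \<Longrightarrow> 0 \<le> potential h"
  using abs_regret_le[of h] regret_le_potential[of h] unfolding abs_le_iff by linarith

lemma potential_Nil: "potential [] = ln (card F) / eta"
  by (simp add: potential_def regret_def cum_loss_def)

lemma potential_snoc_le:
  assumes ft: "ft \<in> F" and b: "in_unit_cube N b"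
  shows "potential (h @ [(ft, b, c)]) \<le> potential h + round_bound (cum h) b ft c"
proof -
  define L where "L = cum h"
  define l where "l = loss_est L b c ft"
  have "ln (\<Sum>f\<in>F. exp (- eta * (L f + l f)))
      \<le> ln (\<Sum>f\<in>F. exp (- eta * L f)) - eta * (\<Sum>f\<in>F. q L f * l f)
         + eta\<^sup>2 / 2 * (\<Sum>f\<in>F. q L f * (l f)\<^sup>2)"
    using ln_sum_exp_add_le[OF finite_grid_class F_nonempty less_imp_le[OF eta_pos], of l L]
      ips_loss_nonneg[OF b]
    by (simp add: l_def ew_weight_eq cong: sum.cong)
  also have "\<dots> \<le> ln (\<Sum>f\<in>F. exp (- eta * L f)) - eta * (\<Sum>f\<in>F. q L f * l f)
         + eta\<^sup>2 / 2 * (1 / p L b (winner b ft))"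
    using ips_second_moment_le[OF b ft] unfolding l_def by (intro add_left_mono mult_left_mono) auto
  finally have "ln (\<Sum>f\<in>F. exp (- eta * (L f + l f))) / eta
      \<le> ln (\<Sum>f\<in>F. exp (- eta * L f)) / eta - (\<Sum>f\<in>F. q L f * l f)
         + eta / 2 * (1 / p L b (winner b ft))"
    using eta_pos by (simp add: field_simps power2_eq_square)
  then show ?thesis
    unfolding potential_def round_bound_def cum_loss_snoc regret_snoc
    by (simp add: L_def l_def)
qed

lemma round_mean_round_bound_le:
  assumes b: "in_unit_cube N b"
  shows "round_mean L b (round_bound L b) \<le> drift"
proof -
  have "round_mean L b (round_bound L b)
      = 1 + (smax AS (score b rho) - rho (winner b rho_grid) * pay b rho_grid)
        + eta / 2 * round_mean L b (\<lambda>ft c. 1 / p L b (winner b ft))"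
    unfolding round_bound_def
    by (simp only: round_mean_add round_mean_diff round_mean_const round_mean_mult round_mean_click
      round_mean_ips_loss[OF rho_grid_in_F] round_mean_weighted_ips_loss)
  also have "\<dots> \<le> 1 + 1 / real T + eta / 2 * real N"
    using grid_floor_payment_deficit[OF b] round_mean_inverse_win_prob eta_pos
    by (intro add_mono mult_left_mono) auto
  finally show ?thesis by (simp add: drift_def)
qed

lemma round_mean_potential_le:
  assumes b: "in_unit_cube N b"
  shows "round_mean (cum h) b (\<lambda>ft c. potential (h @ [(ft, b, c)]))
           \<le> potential h + drift"
proof -
  have "round_mean (cum h) b (\<lambda>ft c. potential (h @ [(ft, b, c)]))
      \<le> round_mean (cum h) b (\<lambda>ft c. potential h + round_bound (cum h) b ft c)"
    using potential_snoc_le[OF _ b] by (intro round_mean_mono)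
  also have "\<dots> = potential h + round_mean (cum h) b (round_bound (cum h) b)"
    by (simp add: round_mean_add round_mean_const)
  finally show ?thesis
    using round_mean_round_bound_le[OF b, of "cum h"] by linarith
qed

subsection \<open>The random game\<close>

lemma nn_integral_ew_weight: "(\<integral>\<^sup>+f. ennreal (q L f) \<partial>count_space UNIV) = 1"
proof -
  have "(\<integral>\<^sup>+f. ennreal (q L f) \<partial>count_space UNIV) = (\<Sum>f\<in>F. ennreal (q L f))"
    using finite_grid_class by (intro nn_integral_count_space') (auto simp: ew_weight_def)
  also have "\<dots> = 1"
    using ew_weight_nonneg by (simp add: sum_ennreal sum_ew_weight)
  finally show ?thesis .
qed

lemma pmf_embed_ew_weight: "pmf (embed_pmf (q L)) f = q L f"
  using ew_weight_nonneg nn_integral_ew_weight by (rule pmf_embed_pmf)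

lemma set_pmf_embed_ew_weight: "set_pmf (embed_pmf (q L)) \<subseteq> F"
  using ew_weight_nonneg nn_integral_ew_weight
  by (auto simp: set_embed_pmf ew_weight_def split: if_splits)

lemma nn_integral_round_eq:
  assumes X: "\<And>ft c. ft \<in> F \<Longrightarrow> 0 \<le> X ft c"
  shows "(\<integral>\<^sup>+ft. \<integral>\<^sup>+c. ennreal (X ft c) \<partial>bernoulli_pmf (rho (winner b ft)) \<partial>embed_pmf (q L))
           = ennreal (round_mean L b X)"
proof -
  have "(\<integral>\<^sup>+c. ennreal (X ft c) \<partial>bernoulli_pmf (rho (winner b ft))) * ennreal (q L ft)
      = ennreal (q L ft * (rho (winner b ft) * X ft True + (1 - rho (winner b ft)) * X ft False))"
    if "ft \<in> F" for ft
    using X[OF that] rho_winner ew_weight_nonneg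
    by (simp add: ennreal_mult'' ennreal_plus[symmetric] mult_ac)
  then have "(\<integral>\<^sup>+ft. \<integral>\<^sup>+c. ennreal (X ft c) \<partial>bernoulli_pmf (rho (winner b ft)) \<partial>embed_pmf (q L))
      = (\<Sum>ft\<in>F. ennreal (q L ft * (rho (winner b ft) * X ft True + (1 - rho (winner b ft)) * X ft False)))"
    using finite_grid_class set_pmf_embed_ew_weight
    by (subst nn_integral_measure_pmf_support[of F])
      (auto simp: pmf_embed_ew_weight dest: subsetD[OF set_pmf_embed_ew_weight])
  also have "\<dots> = ennreal (round_mean L b X)"
    unfolding round_mean_def using X rho_winner ew_weight_nonneg by (intro sum_ennreal) auto
  finally show ?thesis .
qed

lemma nn_integral_round_step_le:
  assumes h: "admissible h"
  shows "(\<integral>\<^sup>+h'. ennreal (potential h') \<partial>round_step AM AS F eta rho adv h)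
           \<le> ennreal (potential h) + ennreal drift"
proof -
  have "(\<integral>\<^sup>+ft. \<integral>\<^sup>+c. ennreal (potential (h @ [(ft, b, c)]))
          \<partial>bernoulli_pmf (rho (winner b ft)) \<partial>embed_pmf (q (cum h)))
        \<le> ennreal (potential h) + ennreal drift"
    if "b \<in> set_pmf (adv h)" for b
  proof -
    have b: "in_unit_cube N b"
      using bids_range[OF that] .
    have "admissible (h @ [(ft, b, c)])" if "ft \<in> F" for ft c
      using h b that by (simp add: admissible_def)
    then have "(\<integral>\<^sup>+ft. \<integral>\<^sup>+c. ennreal (potential (h @ [(ft, b, c)]))
          \<partial>bernoulli_pmf (rho (winner b ft)) \<partial>embed_pmf (q (cum h)))
        = ennreal (round_mean (cum h) b (\<lambda>ft c. potential (h @ [(ft, b, c)])))"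
      using potential_nonneg by (intro nn_integral_round_eq) blast
    also have "\<dots> \<le> ennreal (potential h + drift)"
      using round_mean_potential_le[OF b] by (rule ennreal_leI)
    finally show ?thesis
      using potential_nonneg[OF h] drift_nonneg by (simp add: ennreal_plus)
  qed
  then have "(\<integral>\<^sup>+b. \<integral>\<^sup>+ft. \<integral>\<^sup>+c. ennreal (potential (h @ [(ft, b, c)]))
          \<partial>bernoulli_pmf (rho (winner b ft)) \<partial>embed_pmf (q (cum h)) \<partial>adv h)
      \<le> (\<integral>\<^sup>+b. ennreal (potential h) + ennreal drift \<partial>adv h)"
    by (intro nn_integral_mono_AE) (simp add: AE_measure_pmf_iff)
  then show ?thesis
    by (simp add: round_step_def measure_pmf.emeasure_space_1)
qed

lemma set_pmf_game: "h \<in> set_pmf (game n) \<Longrightarrow> admissible h \<and> length h = n"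
proof (induction n arbitrary: h)
  case 0
  then show ?case by (simp add: admissible_def)
next
  case (Suc n)
  then obtain h0 b ft c where "h0 \<in> set_pmf (game n)" "b \<in> set_pmf (adv h0)"
    "ft \<in> set_pmf (embed_pmf (q (cum h0)))" "h = h0 @ [(ft, b, c)]"
    by (auto simp: round_step_def)
  then show ?case
    using Suc.IH bids_range set_pmf_embed_ew_weight by (fastforce simp: admissible_def)
qed

lemma nn_integral_game_le:
  "(\<integral>\<^sup>+h. ennreal (potential h) \<partial>game n)
     \<le> ennreal (potential [] + real n * drift)"
proof (induction n)
  case 0
  then show ?case by simp
next
  case (Suc n)
  have "(\<integral>\<^sup>+h. ennreal (potential h) \<partial>game (Suc n))
      \<le> (\<integral>\<^sup>+h. ennreal (potential h) \<partial>game n) + ennreal drift"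
    unfolding run_game.simps
    by (rule nn_integral_bind_pmf_le_add) (use set_pmf_game nn_integral_round_step_le in blast)
  also have "\<dots> \<le> ennreal (potential [] + real n * drift) + ennreal drift"
    using Suc.IH by (rule add_right_mono)
  also have "\<dots> = ennreal (potential [] + real (Suc n) * drift)"
    using potential_nonneg[of "[]"] drift_nonneg
    by (simp add: admissible_def algebra_simps flip: ennreal_plus)
  finally show ?case .
qed

theorem expected_regret_le:
  "measure_pmf.expectation (game n) (regret AM AS rho)
     \<le> ln (card F) / eta + real n * (1 / real T + eta * real N / 2)"
proof -
  let ?M = "measure_pmf (game n)"
  have bounded: "AE h in ?M. \<bar>regret AM AS rho h\<bar> \<le> real n"
    using set_pmf_game abs_regret_le by (auto simp: AE_measure_pmf_iff)
  then have int: "integrable ?M (regret AM AS rho)"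
    by (intro measure_pmf.integrable_const_bound[where B = "real n"]) auto
  have "ennreal (measure_pmf.expectation (game n) (\<lambda>h. regret AM AS rho h + real n))
      = (\<integral>\<^sup>+h. ennreal (regret AM AS rho h + real n) \<partial>?M)"
    using int bounded by (intro nn_integral_eq_integral[symmetric]) (auto elim!: eventually_mono)
  also have "\<dots> \<le> (\<integral>\<^sup>+h. ennreal (potential h) \<partial>?M)"
    using set_pmf_game regret_le_potential
    by (intro nn_integral_mono_AE) (auto simp: AE_measure_pmf_iff intro: ennreal_leI)
  also have "\<dots> \<le> ennreal (potential [] + real n * drift)"
    by (rule nn_integral_game_le)
  finally have "measure_pmf.expectation (game n) (\<lambda>h. regret AM AS rho h + real n)
      \<le> potential [] + real n * drift"
    using potential_nonneg[of "[]"] drift_nonneg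
    by (subst (asm) ennreal_le_iff) (auto simp: admissible_def)
  then show ?thesis
    using int by (simp add: potential_Nil drift_def algebra_simps)
qed

end

theorem corollary1:
  "\<exists>C::real. \<forall>N T rho am as adv.
     2 \<le> N \<longrightarrow> 2 \<le> T \<longrightarrow>
     (\<forall>i<N. 0 \<le> rho i \<and> rho i \<le> 1) \<longrightarrow>
     valid_argmax N am \<longrightarrow> valid_argsmax N am as \<longrightarrow>
     (\<forall>h. \<forall>b\<in>set_pmf (adv h). \<forall>i<N. 0 \<le> b i \<and> b i \<le> 1) \<longrightarrow>
     measure_pmf.expectation
        (run_game am as (grid_class N T) (sqrt (ln (real T) / real T)) rho adv T)
        (regret am as rho)
       \<le> C * real N * sqrt (real T * ln (real T))"
proof (intro exI[of _ 4] allI impI)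
  fix N T :: nat and rho :: vec and am as :: "vec \<Rightarrow> nat" and adv :: "hist \<Rightarrow> vec pmf"
  assume N: "2 \<le> N" and T: "2 \<le> T" and rho: "\<forall>i<N. 0 \<le> rho i \<and> rho i \<le> 1"
    and am: "valid_argmax N am" and as: "valid_argsmax N am as"
    and adv: "\<forall>h. \<forall>b\<in>set_pmf (adv h). \<forall>i<N. 0 \<le> b i \<and> b i \<le> 1"
  define eta where "eta = sqrt (ln (real T) / real T)"
  interpret grid_auction N T eta rho am as adv
    using T rho am as adv by unfold_locales (auto simp: eta_def in_unit_cube_def)
  have "measure_pmf.expectation (game T) (regret am as rho)
      \<le> ln (card (grid_class N T)) / eta + real T * (1 / real T + eta * real N / 2)"
    by (rule expected_regret_le)
  also have "\<dots> \<le> real N * ln (real T + 1) / eta + 1 + eta * real N * real T / 2"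
    using ln_card_grid_class_le[of N T] eta_pos T by (simp add: divide_right_mono algebra_simps)
  also have "\<dots> \<le> 4 * real N * sqrt (real T * ln (real T))"
    using N T unfolding eta_def by (intro sqrt_tuning_bound) auto
  finally show "measure_pmf.expectation
        (run_game am as (grid_class N T) (sqrt (ln (real T) / real T)) rho adv T)
        (regret am as rho) \<le> 4 * real N * sqrt (real T * ln (real T))"
    unfolding eta_def .
qed

end
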